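(* Let $I$ be a connected and locally connected topological space and $h:I\to\mathbb{R}$ a positive continuous function attaining its lower bound at $v\in I$. Let $x\in I$ and $\lambda\in[h(v),h(x)]$. Then there is $y\in C_{x,\lambda}$ with $h(y)=\lambda$.
   Context: For $x\in I$ and $\lambda\le h(x)$, $C_{x,\lambda}$ denotes the maximal connected subset of $\{y\in I: h(y)\ge\lambda\}$ containing $x$. *)

theory Defs
  imports "HOL-Analysis.Analysis"
begin

definition superlevel_component ::
  "'a topology \<Rightarrow> ('a \<Rightarrow> real) \<Rightarrow> 'a \<Rightarrow> real \<Rightarrow> 'a set" where
  "superlevel_component X h x lam =
     connected_component_of_set (subtopology X {y \<in> topspace X. h y \<ge> lam}) x"

end

theory Submission
  imports Defs
begin

text \<open>If the component \<open>C\<close> of \<open>x\<close> in \<open>{h \<ge> \<lambda>}\<close> contained no point of level \<open>\<lambda>\<close>,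
  it would lie in the open set \<open>{h > \<lambda>}\<close> and be the component of \<open>x\<close> there too. Being a
  component of a closed set it is closed, and being a component of an open set in a locally
  connected space it is open; by connectedness it is the whole space, which is absurd since
  \<open>h v \<le> \<lambda>\<close>.\<close>

lemma connected_component_of_set_subtopology_eq:
  assumes "connected_component_of_set (subtopology X S) x \<subseteq> T" and "T \<subseteq> S"
  shows "connected_component_of_set (subtopology X T) x
       = connected_component_of_set (subtopology X S) x"
proof (cases "x \<in> topspace X \<inter> T")
  case True
  show ?thesis
  proof
    show "connected_component_of_set (subtopology X T) x
        \<subseteq> connected_component_of_set (subtopology X S) x"
      by (rule connected_component_of_maximal)
        (use True assms(2) connectedin_connected_component_of[of "subtopology X T" x]
          in \<open>auto simp: connectedin_subtopology connected_component_of_refl\<close>)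
    show "connected_component_of_set (subtopology X S) x
        \<subseteq> connected_component_of_set (subtopology X T) x"
      by (rule connected_component_of_maximal)
        (use True assms connectedin_connected_component_of[of "subtopology X S" x]
          in \<open>auto simp: connectedin_subtopology connected_component_of_refl\<close>)
  qed
next
  case False
  have "x \<notin> topspace (subtopology X S)"
  proof
    assume "x \<in> topspace (subtopology X S)"
    then have "x \<in> connected_component_of_set (subtopology X S) x"
      by (simp add: connected_component_of_refl)
    with False assms(1) \<open>x \<in> topspace (subtopology X S)\<close> show False
      by auto
  qed
  moreover have "x \<notin> topspace (subtopology X T)"
    using False by simp
  ultimately show ?thesis
    by (metis connected_component_of_eq_empty)
qed

lemma connected_component_of_closed_in_open_eq_topspace:
  assumes "connected_space X" and "locally_connected_space X"
    and "closedin X S" and "openin X T" and "T \<subseteq> S"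
    and "connected_component_of_set (subtopology X S) x \<subseteq> T" and "x \<in> T"
  shows "connected_component_of_set (subtopology X S) x = topspace X"
proof -
  let ?C = "connected_component_of_set (subtopology X S) x"
  have "closedin X ?C"
    using closedin_trans_full[OF closedin_connected_component_of assms(3)] .
  moreover have "openin X ?C"
    using assms(2,4,7) connected_component_of_set_subtopology_eq[OF assms(6,5)]
    by (metis locally_connected_space_eq_open_connected_component_of)
  moreover have "x \<in> ?C"
    using assms(4,5,7) openin_subset
    by (fastforce simp: connected_component_of_refl)
  ultimately show ?thesis
    using assms(1) unfolding connected_space_clopen_in by blast
qed

lemma superlevel_component_meets_level:
  assumes "connected_space X" and "locally_connected_space X"
    and "continuous_map X euclideanreal h"
    and "v \<in> topspace X" and "h v \<le> lam"
    and "x \<in> topspace X" and "lam \<le> h x"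
  shows "\<exists>y\<in>superlevel_component X h x lam. h y = lam"
proof (rule ccontr)
  assume no_level: "\<not> ?thesis"
  define S where "S = {y \<in> topspace X. h y \<ge> lam}"
  define T where "T = {y \<in> topspace X. h y > lam}"
  define C where "C = connected_component_of_set (subtopology X S) x"
  have C_eq: "superlevel_component X h x lam = C"
    unfolding superlevel_component_def S_def C_def ..
  have "closedin X S"
    using closedin_continuous_map_preimage[OF assms(3), of "{lam..}"] by (simp add: S_def)
  moreover have "openin X T"
    using openin_continuous_map_preimage[OF assms(3), of "{lam<..}"] by (simp add: T_def)
  moreover have "T \<subseteq> S"
    by (auto simp: S_def T_def)
  moreover have "C \<subseteq> S"
    using connected_component_of_subset_topspace[of "subtopology X S" x] by (simp add: C_def)
  then have C_sub_T: "C \<subseteq> T"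
    using no_level by (force simp: C_eq S_def T_def)
  moreover have "x \<in> T"
  proof -
    have "x \<in> C"
      using assms(6,7) by (simp add: C_def S_def connected_component_of_refl)
    with C_sub_T show ?thesis ..
  qed
  ultimately have "C = topspace X"
    unfolding C_def by (rule connected_component_of_closed_in_open_eq_topspace[OF assms(1,2)])
  then show False
    using C_sub_T assms(4,5) by (auto simp: T_def)
qed

theorem mainTheorem5:
  fixes X :: "'a topology" and h :: "'a \<Rightarrow> real" and v x :: 'a and lam :: real
  assumes "connected_space X"
    and "locally_connected_space X"
    and "continuous_map X euclideanreal h"
    and "\<forall>y\<in>topspace X. h y > 0"
    and "v \<in> topspace X"
    and "\<forall>y\<in>topspace X. h v \<le> h y"
    and "x \<in> topspace X"
    and "h v \<le> lam" and "lam \<le> h x"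
  shows "\<exists>y\<in>superlevel_component X h x lam. h y = lam"
  using superlevel_component_meets_level[OF assms(1-3,5,8,7,9)] .

end
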